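(* There is an online algorithm for the online covering problem that maintains a nondecreasing $x\in\mathbb{R}^n_{\ge 0}$ satisfying all arrived constraints, whose final objective value satisfies $\langle c,x\rangle\le O(\log n)\cdot\mathsf{OPT}$, and such that the number of arriving constraints on which the algorithm performs an update (i.e., constraints found violated when processed) is at most $\mathrm{poly}(n,\log\mathsf{OPT},\log(1/\alpha_1))$, where $\alpha_1=\min_{j\in[n]}\{c_j/a_{1j}: a_{1j}>0\}$.
   Context: Online covering problem: the LP is $\min \langle c,x\rangle$ over $x\in\mathbb{R}^n_{\ge0}$ subject to $Ax\ge \mathbf{1}$, where $A\in\mathbb{R}^{m\times n}_{\ge 0}$, $c\in\mathbb{R}^n_{>0}$ is known in advance, and $\mathbf{1}$ is the all-ones vector. The rows of $A$ arrive one at a time (the number $m$ may be unknown); in round $i$ the entries $a_{i1},\dots,a_{in}$ are revealed, at least one of them positive, and the algorithm must increase $x$ monotonically (coordinates never decrease) so that $\sum_j a_{ij}x_j\ge 1$. $\mathsf{OPT}$ denotes the optimal value of the LP. *)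

theory Defs
  imports Complex_Main
begin

text \<open>Vectors in R^n are functions nat => real, only indices j < n matter.
  A row (constraint) is a function nat => real; an instance's row sequence is
  a :: nat => nat => real, row i being a i.\<close>

definition cost :: "nat \<Rightarrow> (nat \<Rightarrow> real) \<Rightarrow> (nat \<Rightarrow> real) \<Rightarrow> real" where
  "cost n c x = (\<Sum>j<n. c j * x j)"

definition feasible :: "nat \<Rightarrow> (nat \<Rightarrow> nat \<Rightarrow> real) \<Rightarrow> nat \<Rightarrow> (nat \<Rightarrow> real) \<Rightarrow> bool" where
  "feasible n a m x \<longleftrightarrow> (\<forall>j<n. 0 \<le> x j) \<and> (\<forall>i<m. (\<Sum>j<n. a i j * x j) \<ge> 1)"

definition OPT :: "nat \<Rightarrow> (nat \<Rightarrow> real) \<Rightarrow> (nat \<Rightarrow> nat \<Rightarrow> real) \<Rightarrow> nat \<Rightarrow> real" where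
  "OPT n c a m = Inf {cost n c x | x. feasible n a m x}"

text \<open>alpha_1 = min over j with a_{1j} > 0 of c_j / a_{1j} (first row is a 0).\<close>
definition alpha1 :: "nat \<Rightarrow> (nat \<Rightarrow> real) \<Rightarrow> (nat \<Rightarrow> nat \<Rightarrow> real) \<Rightarrow> real" where
  "alpha1 n c a = Min {c j / a 0 j | j. j < n \<and> a 0 j > 0}"

end

theory Submission
  imports Defs
begin

text \<open>The algorithm runs in phases, doubling a budget \<open>B\<close> that is kept between \<open>OPT\<close>
  and \<open>2 OPT\<close> of the constraints seen so far. Within a phase the point is
  \<open>x = P + B exp L / (n c)\<close>, where \<open>P\<close> is frozen at the start of the phase and the
  exponents \<open>L\<close> start at \<open>0\<close>. A violated row \<open>r\<close> raises each \<open>L\<^sub>j\<close> at rate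
  \<open>r\<^sub>j B / c\<^sub>j\<close> for the least time \<open>\<tau> \<in> \<nat>/n\<close> that satisfies it. The phase clock \<open>t\<close>
  (the total of these times) is at most \<open>\<Sum> c\<^sub>j x\<^sub>j L\<^sub>j / B\<close> for every feasible \<open>x\<close>, hence at most
  \<open>2 max L \<le> 2 ln (\<Sum> exp L)\<close>, while \<open>\<Sum> exp L\<close> grows at most like \<open>n (1 + 3t)\<close>;
  so \<open>t = O(log n)\<close>. This bounds the cost of a phase by \<open>O(B log n)\<close>, hence the total
  cost by \<open>O(OPT log n)\<close> (the budgets double), and since every update advances the
  clock by at least \<open>1/n\<close>, a phase contains \<open>O(n log n)\<close> updates. The budget starts
  at least at \<open>\<alpha>\<^sub>1\<close> and never exceeds \<open>2 OPT\<close>, so there are \<open>O(log (OPT/\<alpha>\<^sub>1))\<close> phases.\<close>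

lemma feasible_Suc_iff:
  "feasible n a (Suc m) x \<longleftrightarrow> feasible n a m x \<and> 1 \<le> (\<Sum>j<n. a m j * x j)"
  unfolding feasible_def by (auto simp: less_Suc_eq)

lemma feasible_SucD: "feasible n a (Suc m) x \<Longrightarrow> feasible n a m x"
  by (simp add: feasible_Suc_iff)

lemma feasible_cong: "(\<And>i. i < m \<Longrightarrow> a' i = a i) \<Longrightarrow> feasible n a' m x = feasible n a m x"
  unfolding feasible_def by auto

lemma OPT_cong: "(\<And>i. i < m \<Longrightarrow> a' i = a i) \<Longrightarrow> OPT n c a' m = OPT n c a m"
  unfolding OPT_def using feasible_cong[of m a' a n] by simp

lemma cost_add: "cost n c (\<lambda>j. x j + y j) = cost n c x + cost n c y"
  unfolding cost_def by (simp add: distrib_left sum.distrib)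

locale covering_instance =
  fixes n :: nat and c :: "nat \<Rightarrow> real" and a :: "nat \<Rightarrow> nat \<Rightarrow> real"
  assumes n_ge_1: "n \<ge> 1"
    and c_pos: "\<And>j. j < n \<Longrightarrow> c j > 0"
    and a_nonneg: "\<And>i j. j < n \<Longrightarrow> 0 \<le> a i j"
    and row_nonzero: "\<And>i. \<exists>j<n. 0 < a i j"
begin

lemma ln_n_nonneg: "0 \<le> ln (real n)"
  using n_ge_1 by simp

lemma feasible_exists: "\<exists>x. feasible n a m x"
proof -
  define x where "x = (\<lambda>j. \<Sum>i<m. if a i j > 0 then 1 / a i j else 0)"
  have "feasible n a m x" unfolding feasible_def
  proof (intro conjI allI impI)
    fix j assume "j < n" then show "0 \<le> x j" unfolding x_def by (auto intro!: sum_nonneg)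
  next
    fix i assume "i < m"
    obtain j where j: "j < n" "0 < a i j" using row_nonzero by blast
    have "1 / a i j = (if a i j > 0 then 1 / a i j else 0)" using j by simp
    also have "\<dots> \<le> x j" unfolding x_def using \<open>i < m\<close> by (intro member_le_sum) auto
    finally have "1 / a i j \<le> x j" .
    then have "1 \<le> a i j * x j" using j by (simp add: divide_le_eq mult.commute)
    also have "\<dots> \<le> (\<Sum>j<n. a i j * x j)"
      using j by (intro member_le_sum) (auto intro!: mult_nonneg_nonneg a_nonneg sum_nonneg simp: x_def)
    finally show "(\<Sum>j<n. a i j * x j) \<ge> 1" .
  qed
  then show ?thesis by blast
qed

lemma feasible_upward:
  assumes "feasible n a m x" and "\<And>j. j < n \<Longrightarrow> x j \<le> y j"
  shows "feasible n a m y"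
  unfolding feasible_def
proof (intro conjI allI impI)
  fix j assume "j < n"
  then show "0 \<le> y j" using assms unfolding feasible_def by (meson order_trans)
next
  fix i assume "i < m"
  have "(\<Sum>j<n. a i j * x j) \<le> (\<Sum>j<n. a i j * y j)"
    by (intro sum_mono mult_left_mono) (auto simp: assms(2) a_nonneg)
  then show "1 \<le> (\<Sum>j<n. a i j * y j)" using assms(1) \<open>i < m\<close> unfolding feasible_def by force
qed

lemma alpha1_pos: "alpha1 n c a > 0"
  and alpha1_le: "j < n \<Longrightarrow> a 0 j > 0 \<Longrightarrow> alpha1 n c a \<le> c j / a 0 j"
proof -
  have fin: "finite {c j / a 0 j | j. j < n \<and> a 0 j > 0}"
    and ne: "{c j / a 0 j | j. j < n \<and> a 0 j > 0} \<noteq> {}"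
    using row_nonzero[of 0] by auto
  show "alpha1 n c a > 0" unfolding alpha1_def using fin ne c_pos by (subst Min_gr_iff) auto
  show "j < n \<Longrightarrow> a 0 j > 0 \<Longrightarrow> alpha1 n c a \<le> c j / a 0 j"
    unfolding alpha1_def using fin by (intro Min_le) auto
qed

lemma cost_ge_alpha1:
  assumes "m \<ge> 1" and "feasible n a m x"
  shows "alpha1 n c a \<le> cost n c x"
proof -
  have x_nonneg: "\<And>j. j < n \<Longrightarrow> 0 \<le> x j" and row0: "1 \<le> (\<Sum>j<n. a 0 j * x j)"
    using assms unfolding feasible_def by auto
  have "alpha1 n c a \<le> alpha1 n c a * (\<Sum>j<n. a 0 j * x j)"
    using row0 alpha1_pos by simp
  also have "\<dots> = (\<Sum>j<n. alpha1 n c a * a 0 j * x j)"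
    by (simp add: sum_distrib_left mult.assoc)
  also have "\<dots> \<le> (\<Sum>j<n. c j * x j)"
  proof (intro sum_mono)
    fix j assume "j \<in> {..<n}"
    then have j: "j < n" by simp
    show "alpha1 n c a * a 0 j * x j \<le> c j * x j"
    proof (cases "a 0 j > 0")
      case True
      then have "alpha1 n c a * a 0 j \<le> c j" using alpha1_le[OF j True] by (simp add: field_simps)
      then show ?thesis using x_nonneg[OF j] by (rule mult_right_mono)
    next
      case False
      then have "a 0 j = 0" using a_nonneg[OF j, of 0] by simp
      then show ?thesis using x_nonneg[OF j] c_pos[OF j] by simp
    qed
  qed
  finally show ?thesis unfolding cost_def .
qed

lemma cost_nonneg: "feasible n a m x \<Longrightarrow> 0 \<le> cost n c x"
  unfolding cost_def feasible_def using c_pos by (force intro!: sum_nonneg mult_nonneg_nonneg)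

lemma feasible_costs_nonempty: "{cost n c x | x. feasible n a m x} \<noteq> {}"
  using feasible_exists by auto

lemma feasible_costs_bdd_below: "bdd_below {cost n c x | x. feasible n a m x}"
  unfolding bdd_below_def using cost_nonneg by blast

lemma OPT_ge_alpha1: "m \<ge> 1 \<Longrightarrow> alpha1 n c a \<le> OPT n c a m"
  unfolding OPT_def using feasible_costs_nonempty cost_ge_alpha1 by (intro cInf_greatest) auto

lemma OPT_pos: "m \<ge> 1 \<Longrightarrow> 0 < OPT n c a m"
  using OPT_ge_alpha1 alpha1_pos by (meson less_le_trans)

lemma OPT_le_Suc: "OPT n c a m \<le> OPT n c a (Suc m)"
  unfolding OPT_def using feasible_costs_nonempty feasible_costs_bdd_below feasible_SucD
  by (intro cInf_superset_mono) auto

lemma OPT_less_imp_feasible: "OPT n c a m < z \<Longrightarrow> \<exists>x. feasible n a m x \<and> cost n c x < z"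
  using cInf_lessD[OF feasible_costs_nonempty] unfolding OPT_def by blast

end

definition mw_load :: "nat \<Rightarrow> (nat \<Rightarrow> real) \<Rightarrow> (nat \<Rightarrow> real) \<Rightarrow> real \<Rightarrow> real" where
  "mw_load n w L u = (\<Sum>j<n. w j * exp (L j + w j * u) / real n)"

definition mw_steps :: "nat \<Rightarrow> (nat \<Rightarrow> real) \<Rightarrow> (nat \<Rightarrow> real) \<Rightarrow> nat" where
  "mw_steps n w L = (LEAST k. 1 \<le> mw_load n w L (real k / real n))"

definition mean_exp :: "nat \<Rightarrow> (nat \<Rightarrow> real) \<Rightarrow> real" where
  "mean_exp n L = (\<Sum>j<n. exp (L j) / real n)"

lemma mean_exp_zero: "n \<ge> 1 \<Longrightarrow> mean_exp n (\<lambda>j. 0) = 1"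
  unfolding mean_exp_def by simp

lemma exponent_le_ln_mean_exp:
  assumes "j < n"
  shows "L j \<le> ln (real n) + ln (mean_exp n L)"
proof -
  have sum_eq: "(\<Sum>j<n. exp (L j)) = real n * mean_exp n L"
    unfolding mean_exp_def sum_distrib_left using assms by (intro sum.cong refl) simp
  have "exp (L j) \<le> (\<Sum>j<n. exp (L j))" using assms by (intro member_le_sum) auto
  then have "ln (exp (L j)) \<le> ln (\<Sum>j<n. exp (L j))"
    using exp_gt_zero[of "L j"] by (subst ln_le_cancel_iff) linarith+
  then have "L j \<le> ln (\<Sum>j<n. exp (L j))" by simp
  also have "\<dots> = ln (real n) + ln (mean_exp n L)"
  proof -
    have "0 < mean_exp n L" unfolding mean_exp_def using assms by (intro sum_pos) auto
    then show ?thesis unfolding sum_eq using assms by (simp add: ln_mult)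
  qed
  finally show ?thesis .
qed

text \<open>One multiplicative-weights update: \<open>L\<^sub>j\<close> grows at rate \<open>w\<^sub>j = r\<^sub>j B / c\<^sub>j\<close>, and
  \<open>mw_load n w L u\<close> is the contribution of the exponential part of the point to the
  violated row \<open>r\<close> after time \<open>u\<close>.\<close>

locale mw_step =
  fixes n :: nat and w L :: "nat \<Rightarrow> real"
  assumes n_ge_1: "n \<ge> 1"
    and w_nonneg: "\<And>j. j < n \<Longrightarrow> 0 \<le> w j"
    and L_nonneg: "\<And>j. j < n \<Longrightarrow> 0 \<le> L j"
    and w_nonzero: "\<exists>j<n. 0 < w j"
    and load_lt_1: "mw_load n w L 0 < 1"
begin

abbreviation "tau \<equiv> real (mw_steps n w L) / real n"

lemma mw_load_term_le:
  "j < n \<Longrightarrow> w j * exp (L j + w j * u) / real n \<le> mw_load n w L u"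
  unfolding mw_load_def using w_nonneg by (intro member_le_sum) auto

lemma ex_load_ge_1: "\<exists>k. 1 \<le> mw_load n w L (real k / real n)"
proof -
  obtain j where j: "j < n" "w j > 0" using w_nonzero by blast
  obtain k :: nat where k: "real n * real n / (w j * w j) < real k"
    using reals_Archimedean2 by blast
  define u where "u = real k / real n"
  have n_pos: "real n > 0" using n_ge_1 by simp
  have "real n / (w j * w j) = (real n * real n / (w j * w j)) / real n" using n_pos by simp
  also have "\<dots> < u" unfolding u_def using k n_pos by (rule divide_strict_right_mono)
  finally have "real n / (w j * w j) < u" .
  then have u_large: "real n < w j * w j * u"
    using j(2) by (simp add: pos_divide_less_eq mult.commute)
  have "1 + w j * u \<le> exp (w j * u)" by (rule exp_ge_add_one_self)
  also have "\<dots> \<le> exp (L j + w j * u)" using L_nonneg[OF j(1)] by simp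
  finally have "w j * (1 + w j * u) \<le> w j * exp (L j + w j * u)"
    using j(2) by (intro mult_left_mono) auto
  moreover have "real n \<le> w j * (1 + w j * u)"
    using u_large j(2) by (simp add: distrib_left mult.assoc)
  ultimately have "1 \<le> w j * exp (L j + w j * u) / real n"
    using n_pos by (simp add: le_divide_eq)
  then show ?thesis using mw_load_term_le[OF j(1)] unfolding u_def by (meson order_trans)
qed

lemma load_at_tau_ge_1: "1 \<le> mw_load n w L tau"
  unfolding mw_steps_def using ex_load_ge_1 by (rule LeastI_ex)

lemma mw_steps_pos: "mw_steps n w L \<ge> 1"
  using load_at_tau_ge_1 load_lt_1 by (cases "mw_steps n w L") auto

lemma tau_ge: "1 / real n \<le> tau"
  using mw_steps_pos n_ge_1 by (simp add: divide_right_mono)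

lemma w_lt_n: "j < n \<Longrightarrow> w j < real n"
proof -
  assume j: "j < n"
  have "w j * exp (L j) / real n < 1" using mw_load_term_le[OF j, of 0] load_lt_1 by simp
  moreover have "w j \<le> w j * exp (L j)"
    using w_nonneg[OF j] L_nonneg[OF j] by (simp add: mult_le_cancel_left1)
  ultimately show ?thesis using n_ge_1 by (simp add: field_simps)
qed

text \<open>The minimality of the number of steps, together with \<open>w\<^sub>j / n < 1\<close>, keeps the
  overshoot of the last step below the factor \<open>e\<close>.\<close>

lemma load_at_tau_le_3: "mw_load n w L tau \<le> 3"
proof -
  have n_pos: "real n > 0" using n_ge_1 by simp
  define u where "u = real (mw_steps n w L - 1) / real n"
  have before: "mw_load n w L u < 1"
    unfolding u_def mw_steps_def
    using not_less_Least[of "mw_steps n w L - 1" "\<lambda>k. 1 \<le> mw_load n w L (real k / real n)"]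
      mw_steps_pos unfolding mw_steps_def by force
  have tau_eq: "tau = u + 1 / real n"
    unfolding u_def using mw_steps_pos n_pos by (simp add: of_nat_diff field_simps)
  have "mw_load n w L tau \<le> (\<Sum>j<n. exp 1 * (w j * exp (L j + w j * u) / real n))"
    unfolding mw_load_def
  proof (intro sum_mono)
    fix j assume "j \<in> {..<n}"
    then have j: "j < n" by simp
    have "exp (L j + w j * tau) = exp (L j + w j * u) * exp (w j / real n)"
      unfolding tau_eq by (simp add: algebra_simps exp_add[symmetric])
    also have "\<dots> \<le> exp (L j + w j * u) * exp 1"
      using w_lt_n[OF j] n_pos by (intro mult_left_mono) (auto simp: field_simps)
    finally have "w j * exp (L j + w j * tau) \<le> w j * (exp (L j + w j * u) * exp 1)"
      using w_nonneg[OF j] by (intro mult_left_mono) auto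
    then show "w j * exp (L j + w j * tau) / real n \<le> exp 1 * (w j * exp (L j + w j * u) / real n)"
      using n_pos by (simp add: field_simps)
  qed
  also have "\<dots> = exp 1 * mw_load n w L u" unfolding mw_load_def by (simp add: sum_distrib_left)
  also have "\<dots> \<le> exp 1 * 1" using before by (intro mult_left_mono) auto
  also have "\<dots> \<le> 3" using exp_le by simp
  finally show ?thesis .
qed

lemma mean_exp_step: "mean_exp n (\<lambda>j. L j + w j * tau) \<le> mean_exp n L + 3 * tau"
proof -
  have n_pos: "real n > 0" using n_ge_1 by simp
  have "mean_exp n (\<lambda>j. L j + w j * tau) - mean_exp n L
      = (\<Sum>j<n. (exp (L j + w j * tau) - exp (L j)) / real n)"
    unfolding mean_exp_def sum_subtractf[symmetric] diff_divide_distrib ..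
  also have "\<dots> \<le> (\<Sum>j<n. tau * (w j * exp (L j + w j * tau) / real n))"
  proof (intro sum_mono)
    fix j assume "j \<in> {..<n}"
    then have j: "j < n" by simp
    define y where "y = w j * tau"
    have "1 - y \<le> exp (- y)" using exp_ge_add_one_self[of "- y"] by simp
    then have "exp (L j + y) * (1 - y) \<le> exp (L j + y) * exp (- y)" by (intro mult_left_mono) auto
    then have "exp (L j + y) - exp (L j) \<le> y * exp (L j + y)"
      by (simp add: algebra_simps exp_add[symmetric])
    then have "(exp (L j + y) - exp (L j)) / real n \<le> y * exp (L j + y) / real n"
      using n_pos by (intro divide_right_mono) auto
    also have "\<dots> = tau * (w j * exp (L j + y) / real n)" unfolding y_def by simp
    finally show "(exp (L j + w j * tau) - exp (L j)) / real n \<le> tau * (w j * exp (L j + w j * tau) / real n)"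
      unfolding y_def .
  qed
  also have "\<dots> = tau * mw_load n w L tau" unfolding mw_load_def by (simp add: sum_distrib_left)
  also have "\<dots> \<le> tau * 3" using load_at_tau_le_3 by (intro mult_left_mono) auto
  finally show ?thesis by (simp add: algebra_simps)
qed

end

lemma card_less_Suc_filter:
  "card {i. i < Suc m \<and> P i} = card {i. i < m \<and> P i} + (if P m then 1 else 0)"
proof -
  have "{i. i < Suc m \<and> P i} = (if P m then insert m {i. i < m \<and> P i} else {i. i < m \<and> P i})"
    by (auto simp: less_Suc_eq)
  then show ?thesis by simp
qed

lemma clock_bound_numeric:
  fixes t l :: real
  assumes "0 \<le> t" and "t \<le> 2 * (l + ln (1 + 3 * t))"
  shows "t \<le> 4 * l + 41"
proof -
  have "ln ((1 + 3 * t) / 12) \<le> (1 + 3 * t) / 12 - 1" using assms(1) by (intro ln_le_minus_one) auto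
  moreover have "ln ((1 + 3 * t) / 12) = ln (1 + 3 * t) - ln 12" using assms(1) by (simp add: ln_div)
  moreover have "ln (12::real) \<le> 12 - 1" by (intro ln_le_minus_one) auto
  moreover have "(1 + 3 * t) / 12 = 1 / 12 + t / 4" by simp
  ultimately have "ln (1 + 3 * t) \<le> t / 4 + 10 + 1 / 12" by linarith
  moreover have "t \<le> 2 * l + 2 * ln (1 + 3 * t)" using assms(2) by simp
  ultimately show ?thesis by linarith
qed

lemma ln_2_ge_half: "1 / 2 \<le> ln (2::real)"
proof -
  have "exp (1 / 2 :: real) ^ 2 = exp 1" by (simp flip: exp_of_nat_mult)
  then have "exp (1 / 2 :: real) ^ 2 < 2 ^ 2" using exp_le by simp
  then have "exp (1 / 2 :: real) < 2" by (rule power_less_imp_less_base) simp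
  then have "ln (exp (1 / 2 :: real)) \<le> ln 2" by (subst ln_le_cancel_iff) auto
  then show ?thesis by simp
qed

datatype phase_state =
  Phase (budget: real) (base: "nat \<Rightarrow> real") (expo: "nat \<Rightarrow> real") (phase: nat) (clock: real)

definition mw_part :: "nat \<Rightarrow> (nat \<Rightarrow> real) \<Rightarrow> real \<Rightarrow> (nat \<Rightarrow> real) \<Rightarrow> nat \<Rightarrow> real" where
  "mw_part n c B L = (\<lambda>j. B * exp (L j) / (real n * c j))"

definition point :: "nat \<Rightarrow> (nat \<Rightarrow> real) \<Rightarrow> phase_state \<Rightarrow> nat \<Rightarrow> real" where
  "point n c q = (\<lambda>j. base q j + mw_part n c (budget q) (expo q) j)"

definition row_weights :: "(nat \<Rightarrow> real) \<Rightarrow> real \<Rightarrow> (nat \<Rightarrow> real) \<Rightarrow> nat \<Rightarrow> real" where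
  "row_weights c B r = (\<lambda>j. r j * B / c j)"

definition mw_update :: "nat \<Rightarrow> (nat \<Rightarrow> real) \<Rightarrow> (nat \<Rightarrow> real) \<Rightarrow> phase_state \<Rightarrow> phase_state" where
  "mw_update n c r q =
     (let w = row_weights c (budget q) r; t = real (mw_steps n w (expo q)) / real n
      in Phase (budget q) (base q) (\<lambda>j. expo q j + w j * t) (phase q) (clock q + t))"

text \<open>The parameter \<open>Opt\<close> is the optimum of the rows received so far, which the online
  algorithm can compute; the first row and every row that raises it beyond the
  budget open a new phase with budget \<open>2 Opt\<close>.\<close>

definition start_phase :: "nat \<Rightarrow> (nat \<Rightarrow> real) \<Rightarrow> real \<Rightarrow> phase_state option \<Rightarrow> phase_state" where
  "start_phase n c Opt s =
     (case s of
        None \<Rightarrow> Phase (2 * Opt) (\<lambda>j. 0) (\<lambda>j. 0) 1 0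
      | Some q \<Rightarrow> if budget q < Opt then Phase (2 * Opt) (point n c q) (\<lambda>j. 0) (Suc (phase q)) 0 else q)"

definition alg_step ::
  "nat \<Rightarrow> (nat \<Rightarrow> real) \<Rightarrow> real \<Rightarrow> (nat \<Rightarrow> real) \<Rightarrow> phase_state option \<Rightarrow> phase_state" where
  "alg_step n c Opt r s =
     (let q = start_phase n c Opt s
      in if 1 \<le> (\<Sum>j<n. r j * point n c q j) then q else mw_update n c r q)"

fun alg_state :: "nat \<Rightarrow> (nat \<Rightarrow> real) \<Rightarrow> (nat \<Rightarrow> nat \<Rightarrow> real) \<Rightarrow> nat \<Rightarrow> phase_state option" where
  "alg_state n c a 0 = None"
| "alg_state n c a (Suc m) = Some (alg_step n c (OPT n c a (Suc m)) (a m) (alg_state n c a m))"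

definition state_point :: "nat \<Rightarrow> (nat \<Rightarrow> real) \<Rightarrow> phase_state option \<Rightarrow> nat \<Rightarrow> real" where
  "state_point n c s = (case s of None \<Rightarrow> (\<lambda>j. 0) | Some q \<Rightarrow> point n c q)"

definition online_cover :: "nat \<Rightarrow> (nat \<Rightarrow> real) \<Rightarrow> (nat \<Rightarrow> real) list \<Rightarrow> nat \<Rightarrow> real" where
  "online_cover n c rs = state_point n c (alg_state n c (\<lambda>i. rs ! i) (length rs))"

lemma alg_state_cong: "(\<And>i. i < m \<Longrightarrow> a' i = a i) \<Longrightarrow> alg_state n c a' m = alg_state n c a m"
proof (induction m)
  case (Suc m)
  then show ?case using OPT_cong[of "Suc m" a' a n c] by simp
qed simp

lemma online_cover_prefix: "online_cover n c (map a [0..<m]) = state_point n c (alg_state n c a m)"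
proof -
  have "alg_state n c (\<lambda>i. map a [0..<m] ! i) m = alg_state n c a m"
    by (rule alg_state_cong) simp
  then show ?thesis unfolding online_cover_def by simp
qed

lemma row_value_mw_part:
  "(\<Sum>j<n. r j * mw_part n c B (\<lambda>j. L j + row_weights c B r j * u) j) = mw_load n (row_weights c B r) L u"
  unfolding mw_load_def mw_part_def row_weights_def by (intro sum.cong refl) (simp add: ac_simps)

context covering_instance
begin

lemma cost_mw_part: "cost n c (mw_part n c B L) = B * mean_exp n L"
  unfolding cost_def mw_part_def mean_exp_def sum_distrib_left
proof (intro sum.cong refl)
  fix j assume "j \<in> {..<n}"
  then have "0 < c j" using c_pos by simp
  then show "c j * (B * exp (L j) / (real n * c j)) = B * (exp (L j) / real n)" by simp
qed

lemma mw_part_nonneg: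
  assumes "0 \<le> B" and "j < n"
  shows "0 \<le> mw_part n c B L j"
  unfolding mw_part_def using assms c_pos[of j] by simp

lemma mw_part_mono:
  assumes "0 < B" and "j < n" and "L j \<le> L' j"
  shows "mw_part n c B L j \<le> mw_part n c B L' j"
  unfolding mw_part_def using assms c_pos[of j]
  by (intro divide_right_mono mult_left_mono) (auto intro!: mult_nonneg_nonneg)

lemma row_weights_nonneg: "0 < B \<Longrightarrow> j < n \<Longrightarrow> 0 \<le> row_weights c B (a i) j"
  unfolding row_weights_def using a_nonneg c_pos by (simp add: less_imp_le)

lemma weighted_exponents_shift:
  assumes "0 < B"
  shows "(\<Sum>j<n. c j * x j / B * (L j + row_weights c B r j * u))
       = (\<Sum>j<n. c j * x j / B * L j) + u * (\<Sum>j<n. r j * x j)"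
  unfolding sum_distrib_left sum.distrib[symmetric]
proof (intro sum.cong refl)
  fix j assume "j \<in> {..<n}"
  then have "0 < c j" using c_pos by simp
  then show "c j * x j / B * (L j + row_weights c B r j * u) = c j * x j / B * L j + u * (r j * x j)"
    using assms by (simp add: row_weights_def field_simps)
qed

abbreviation "clock_max \<equiv> 4 * ln (real n) + 41"

text \<open>\<open>124 = 1 + 3 \<cdot> 41\<close>, so \<open>gamma \<ge> 1 + 3 clock_max\<close> bounds \<open>mean_exp\<close> throughout a phase.\<close>

abbreviation "gamma \<equiv> 124 * (1 + ln (real n))"

text \<open>The clock inequality is the dual certificate of the phase: every feasible \<open>x\<close> has
  \<open>c\<close>-weighted exponent average at least the elapsed time.\<close>

definition phase_inv :: "real \<Rightarrow> nat \<Rightarrow> phase_state \<Rightarrow> bool" where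
  "phase_inv Opt m q \<longleftrightarrow>
     0 < budget q \<and> Opt \<le> budget q \<and> budget q \<le> 2 * Opt
   \<and> (\<forall>j<n. 0 \<le> base q j \<and> 0 \<le> expo q j)
   \<and> cost n c (base q) \<le> gamma * budget q
   \<and> 0 \<le> clock q \<and> mean_exp n (expo q) \<le> 1 + 3 * clock q
   \<and> (\<forall>x. feasible n a m x \<longrightarrow> clock q \<le> (\<Sum>j<n. c j * x j / budget q * expo q j))
   \<and> 1 \<le> phase q \<and> 2 ^ phase q * alpha1 n c a \<le> budget q
   \<and> feasible n a m (point n c q)"

abbreviation "invariant m q \<equiv> phase_inv (OPT n c a m) m q"

lemma clock_le_clock_max:
  assumes inv: "invariant m q"
  shows "clock q \<le> clock_max"
proof -
  define B t L where "B = budget q" and "t = clock q" and "L = expo q"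
  have B_pos: "0 < B" and B_ge: "OPT n c a m \<le> B" and L_nonneg: "\<And>j. j < n \<Longrightarrow> 0 \<le> L j"
    and potential: "mean_exp n L \<le> 1 + 3 * t" and t_nonneg: "0 \<le> t"
    and dual: "\<And>x. feasible n a m x \<Longrightarrow> t \<le> (\<Sum>j<n. c j * x j / B * L j)"
    using inv unfolding phase_inv_def B_def t_def L_def by auto
  obtain x where x: "feasible n a m x" "cost n c x < 2 * B"
    using OPT_less_imp_feasible[of m "2 * B"] B_ge B_pos by auto
  define M where "M = ln (real n) + ln (mean_exp n L)"
  have L_le_M: "\<And>j. j < n \<Longrightarrow> L j \<le> M" unfolding M_def by (rule exponent_le_ln_mean_exp)
  have M_nonneg: "0 \<le> M" using L_le_M[of 0] L_nonneg[of 0] n_ge_1 by simp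
  have "t \<le> (\<Sum>j<n. c j * x j / B * L j)" using dual[OF x(1)] .
  also have "\<dots> \<le> (\<Sum>j<n. c j * x j / B * M)"
    using x(1) c_pos B_pos L_le_M unfolding feasible_def
    by (intro sum_mono mult_left_mono) (auto simp: less_imp_le)
  also have "\<dots> = cost n c x / B * M"
    unfolding cost_def by (simp add: sum_distrib_right sum_divide_distrib)
  also have "\<dots> \<le> 2 * M"
    using x(2) B_pos M_nonneg by (intro mult_right_mono) (simp_all add: divide_le_eq)
  also have "\<dots> \<le> 2 * (ln (real n) + ln (1 + 3 * t))"
  proof -
    have "0 < mean_exp n L" unfolding mean_exp_def using n_ge_1 by (intro sum_pos) (auto simp: lessThan_empty_iff)
    then show ?thesis unfolding M_def using potential by simp
  qed
  finally have "t \<le> 2 * (ln (real n) + ln (1 + 3 * t))" .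
  from clock_bound_numeric[OF t_nonneg this] show ?thesis unfolding t_def .
qed

lemma cost_point_le:
  assumes inv: "invariant m q"
  shows "cost n c (point n c q) \<le> 2 * gamma * budget q"
proof -
  have B_pos: "0 < budget q" and base_cost: "cost n c (base q) \<le> gamma * budget q"
    and potential: "mean_exp n (expo q) \<le> 1 + 3 * clock q"
    using inv unfolding phase_inv_def by auto
  have "mean_exp n (expo q) \<le> gamma"
    using potential clock_le_clock_max[OF inv] ln_n_nonneg by simp
  then have "budget q * mean_exp n (expo q) \<le> gamma * budget q"
    using B_pos by (simp add: mult.commute)
  then show ?thesis
    unfolding point_def cost_add cost_mw_part using base_cost by linarith
qed

lemma point_nonneg:
  assumes "0 \<le> budget q" and "\<forall>j<n. 0 \<le> base q j" and "j < n"
  shows "0 \<le> point n c q j"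
  unfolding point_def using assms mw_part_nonneg[OF assms(1,3)] by simp

lemma point_le_mw_update_point:
  assumes "0 < budget q" and "j < n"
  shows "point n c q j \<le> point n c (mw_update n c (a i) q) j"
proof -
  define w where "w = row_weights c (budget q) (a i)"
  define t where "t = real (mw_steps n w (expo q)) / real n"
  have "expo q j \<le> expo q j + w j * t"
    unfolding w_def t_def using row_weights_nonneg[OF assms] by simp
  from mw_part_mono[OF assms, of "expo q" "\<lambda>j. expo q j + w j * t", OF this]
  show ?thesis unfolding point_def mw_update_def Let_def w_def t_def by simp
qed

lemma invariant_Suc_if_covered:
  assumes inv: "phase_inv (OPT n c a (Suc m)) m q"
    and covered: "1 \<le> (\<Sum>j<n. a m j * point n c q j)"
  shows "invariant (Suc m) q"
  using assms feasible_SucD unfolding phase_inv_def feasible_Suc_iff by blast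

lemma mw_step_if_violated:
  assumes inv: "phase_inv Opt m q"
    and violated: "\<not> 1 \<le> (\<Sum>j<n. a m j * point n c q j)"
  shows "mw_step n (row_weights c (budget q) (a m)) (expo q)"
proof
  have B_pos: "0 < budget q" and nonneg: "\<forall>j<n. 0 \<le> base q j \<and> 0 \<le> expo q j"
    using inv unfolding phase_inv_def by auto
  show "n \<ge> 1" by (rule n_ge_1)
  show "\<And>j. j < n \<Longrightarrow> 0 \<le> row_weights c (budget q) (a m) j"
    using B_pos by (rule row_weights_nonneg)
  show "\<And>j. j < n \<Longrightarrow> 0 \<le> expo q j" using nonneg by blast
  show "\<exists>j<n. 0 < row_weights c (budget q) (a m) j"
    using row_nonzero[of m] B_pos c_pos unfolding row_weights_def by force
  have "mw_load n (row_weights c (budget q) (a m)) (expo q) 0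
      = (\<Sum>j<n. a m j * mw_part n c (budget q) (expo q) j)"
    using row_value_mw_part[where r = "a m" and B = "budget q" and L = "expo q" and u = 0, symmetric] by simp
  also have "\<dots> \<le> (\<Sum>j<n. a m j * point n c q j)"
    unfolding point_def using nonneg by (intro sum_mono mult_left_mono) (auto simp: a_nonneg)
  finally show "mw_load n (row_weights c (budget q) (a m)) (expo q) 0 < 1" using violated by simp
qed

lemma mw_update_invariant:
  assumes inv: "phase_inv (OPT n c a (Suc m)) m q"
    and violated: "\<not> 1 \<le> (\<Sum>j<n. a m j * point n c q j)"
  shows "invariant (Suc m) (mw_update n c (a m) q)"
    and "clock q + 1 / real n \<le> clock (mw_update n c (a m) q)"
proof -
  define B L w where "B = budget q" and "L = expo q" and "w = row_weights c B (a m)"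
  interpret mw_step n w L
    using mw_step_if_violated[OF inv violated] unfolding B_def L_def w_def .
  define L' where "L' = (\<lambda>j. L j + w j * tau)"
  define q' where "q' = mw_update n c (a m) q"
  have q'_eq: "q' = Phase B (base q) L' (phase q) (clock q + tau)"
    unfolding q'_def mw_update_def Let_def B_def L_def w_def L'_def by simp
  have B_pos: "0 < B" and base_nonneg: "\<forall>j<n. 0 \<le> base q j"
    and potential: "mean_exp n L \<le> 1 + 3 * clock q"
    and dual: "\<And>x. feasible n a m x \<Longrightarrow> clock q \<le> (\<Sum>j<n. c j * x j / B * L j)"
    and feasible_m: "feasible n a m (point n c q)"
    using inv unfolding phase_inv_def B_def L_def by auto
  have "1 \<le> mw_load n w L tau" by (rule load_at_tau_ge_1)
  also have "\<dots> = (\<Sum>j<n. a m j * mw_part n c B L' j)"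
    unfolding L'_def w_def by (rule row_value_mw_part[symmetric])
  also have "\<dots> \<le> (\<Sum>j<n. a m j * point n c q' j)"
    unfolding q'_eq point_def using base_nonneg
    by (intro sum_mono mult_left_mono) (auto simp: a_nonneg)
  finally have covered: "1 \<le> (\<Sum>j<n. a m j * point n c q' j)" .
  have "feasible n a m (point n c q')"
    using feasible_upward[OF feasible_m] point_le_mw_update_point B_pos
    unfolding q'_def B_def by blast
  with covered have feasible: "feasible n a (Suc m) (point n c q')"
    unfolding feasible_Suc_iff by blast
  have dual': "clock q + tau \<le> (\<Sum>j<n. c j * x j / B * L' j)" if "feasible n a (Suc m) x" for x
  proof -
    have "tau * 1 \<le> tau * (\<Sum>j<n. a m j * x j)"
      using that unfolding feasible_Suc_iff by (intro mult_left_mono) auto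
    moreover have "clock q \<le> (\<Sum>j<n. c j * x j / B * L j)"
      using dual feasible_SucD[OF that] .
    ultimately show ?thesis
      unfolding L'_def w_def weighted_exponents_shift[OF B_pos] by linarith
  qed
  have "mean_exp n L' \<le> 1 + 3 * (clock q + tau)"
    using mean_exp_step potential unfolding L'_def by simp
  moreover have "\<forall>j<n. 0 \<le> L' j"
    unfolding L'_def using w_nonneg L_nonneg by simp
  ultimately show "invariant (Suc m) q'"
    using inv feasible dual' unfolding phase_inv_def q'_eq B_def by auto
  show "clock q + 1 / real n \<le> clock q'"
    unfolding q'_eq using tau_ge by simp
qed

lemma start_first_phase:
  defines "q0 \<equiv> start_phase n c (OPT n c a (Suc 0)) None"
  shows "phase_inv (OPT n c a (Suc 0)) 0 q0" and "phase q0 = 1" and "clock q0 = 0"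
    and "\<And>j. j < n \<Longrightarrow> 0 \<le> point n c q0 j"
proof -
  define Opt where "Opt = OPT n c a (Suc 0)"
  have Opt: "0 < Opt" "alpha1 n c a \<le> Opt" unfolding Opt_def using OPT_pos OPT_ge_alpha1 by auto
  have q0_eq: "q0 = Phase (2 * Opt) (\<lambda>j. 0) (\<lambda>j. 0) 1 0"
    unfolding q0_def start_phase_def Opt_def by simp
  show point_nonneg: "\<And>j. j < n \<Longrightarrow> 0 \<le> point n c q0 j"
    using Opt by (intro point_nonneg) (simp_all add: q0_eq)
  then have "feasible n a 0 (point n c q0)" unfolding feasible_def by simp
  then show "phase_inv (OPT n c a (Suc 0)) 0 q0"
    unfolding phase_inv_def Opt_def[symmetric] using Opt ln_n_nonneg n_ge_1
    by (simp add: q0_eq mean_exp_zero cost_def)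
  show "phase q0 = 1" and "clock q0 = 0" unfolding q0_eq by simp_all
qed

lemma start_phase_keep:
  assumes inv: "invariant m q" and "\<not> budget q < OPT n c a (Suc m)"
  shows "phase_inv (OPT n c a (Suc m)) m q"
proof -
  have "budget q \<le> 2 * OPT n c a (Suc m)"
    using inv OPT_le_Suc[of m] unfolding phase_inv_def by linarith
  then show ?thesis using assms unfolding phase_inv_def by auto
qed

lemma start_new_phase:
  assumes inv: "invariant m q" and low: "budget q < OPT n c a (Suc m)"
  defines "q0 \<equiv> start_phase n c (OPT n c a (Suc m)) (Some q)"
  shows "phase_inv (OPT n c a (Suc m)) m q0" and "phase q0 = Suc (phase q)" and "clock q0 = 0"
    and "\<And>j. j < n \<Longrightarrow> point n c q j \<le> point n c q0 j"
proof -
  define Opt where "Opt = OPT n c a (Suc m)"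
  have q0_eq: "q0 = Phase (2 * Opt) (point n c q) (\<lambda>j. 0) (Suc (phase q)) 0"
    unfolding q0_def start_phase_def Opt_def using low by simp
  have B_pos: "0 < budget q" and B_low: "budget q < Opt"
    and base_nonneg: "\<forall>j<n. 0 \<le> base q j"
    and phase_budget: "2 ^ phase q * alpha1 n c a \<le> budget q"
    and feasible_m: "feasible n a m (point n c q)"
    using inv low unfolding phase_inv_def Opt_def by auto
  show point_le: "\<And>j. j < n \<Longrightarrow> point n c q j \<le> point n c q0 j"
    unfolding q0_eq point_def[of n c "Phase _ _ _ _ _"]
    using mw_part_nonneg B_pos B_low by simp
  have "cost n c (point n c q) \<le> 2 * gamma * budget q" by (rule cost_point_le[OF inv])
  also have "\<dots> = gamma * (2 * budget q)" by simp
  also have "\<dots> \<le> gamma * (2 * Opt)" using B_low ln_n_nonneg by (intro mult_left_mono) auto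
  finally have base_cost: "cost n c (point n c q) \<le> gamma * (2 * Opt)" .
  have "feasible n a m (point n c q0)" using feasible_upward[OF feasible_m point_le] .
  moreover have "\<forall>j<n. 0 \<le> point n c q j" using point_nonneg B_pos base_nonneg by auto
  ultimately show "phase_inv (OPT n c a (Suc m)) m q0"
    unfolding phase_inv_def Opt_def[symmetric]
    using B_pos B_low base_cost phase_budget n_ge_1 by (simp add: q0_eq mean_exp_zero)
  show "phase q0 = Suc (phase q)" and "clock q0 = 0" unfolding q0_eq by simp_all
qed

abbreviation "alg_point m \<equiv> state_point n c (alg_state n c a m)"

definition changes :: "nat \<Rightarrow> nat" where
  "changes m = card {i. i < m \<and> (\<exists>j<n. alg_point i j \<noteq> alg_point (Suc i) j)}"

text \<open>Each completed phase accounts for at most \<open>1 + n clock_max\<close> changes: one when it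
  starts and one per clock advance of at least \<open>1/n\<close>.\<close>

abbreviation "allowance q \<equiv> (real (phase q) - 1) * (1 + real n * clock_max) + 1 + real n * clock q"

definition tracked :: "nat \<Rightarrow> phase_state option \<Rightarrow> bool" where
  "tracked m s \<longleftrightarrow>
     (case s of None \<Rightarrow> m = 0 | Some q \<Rightarrow> invariant m q \<and> real (changes m) \<le> allowance q)"

lemma changes_Suc:
  "changes (Suc m) = changes m + (if \<exists>j<n. alg_point m j \<noteq> alg_point (Suc m) j then 1 else 0)"
  unfolding changes_def by (rule card_less_Suc_filter)

lemma start_phase_tracked:
  assumes "tracked m (alg_state n c a m)"
  defines "q0 \<equiv> start_phase n c (OPT n c a (Suc m)) (alg_state n c a m)"
  shows "phase_inv (OPT n c a (Suc m)) m q0 \<and> (\<forall>j<n. alg_point m j \<le> point n c q0 j)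
    \<and> real (changes m) + (if \<exists>j<n. alg_point m j \<noteq> point n c q0 j then 1 else 0) \<le> allowance q0"
proof (cases "alg_state n c a m")
  case None
  then have "m = 0" using assms(1) unfolding tracked_def by simp
  then show ?thesis
    using start_first_phase unfolding q0_def None by (simp add: state_point_def changes_def)
next
  case (Some q)
  then have inv: "invariant m q" and counted: "real (changes m) \<le> allowance q"
    using assms(1) unfolding tracked_def by simp_all
  have X: "alg_point m = point n c q" using Some by (simp add: state_point_def)
  show ?thesis
  proof (cases "budget q < OPT n c a (Suc m)")
    case True
    note new = start_new_phase[OF inv True, folded Some, folded q0_def]
    have "real n * clock q \<le> real n * clock_max"
      using clock_le_clock_max[OF inv] by (intro mult_left_mono) auto
    then have "real (changes m) + 1
        \<le> (real (phase q) - 1) * (1 + real n * clock_max) + 1 + real n * clock_max + 1"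
      using counted by linarith
    also have "\<dots> = allowance q0" using new(2,3) by (simp add: algebra_simps)
    finally show ?thesis using new(1,4) unfolding X by simp
  next
    case False
    then have "q0 = q" unfolding q0_def Some start_phase_def by simp
    then show ?thesis using start_phase_keep[OF inv False] counted unfolding X by simp
  qed
qed

lemma tracked_Suc:
  assumes "tracked m (alg_state n c a m)"
  shows "tracked (Suc m) (alg_state n c a (Suc m))"
    and "\<And>j. j < n \<Longrightarrow> alg_point m j \<le> alg_point (Suc m) j"
proof (atomize (full))
  define q0 where "q0 = start_phase n c (OPT n c a (Suc m)) (alg_state n c a m)"
  have start_inv: "phase_inv (OPT n c a (Suc m)) m q0"
    and start_mono: "\<forall>j<n. alg_point m j \<le> point n c q0 j"
    and start_count:
      "real (changes m) + (if \<exists>j<n. alg_point m j \<noteq> point n c q0 j then 1 else 0) \<le> allowance q0"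
    using start_phase_tracked[OF assms] unfolding q0_def by blast+
  have step: "alg_state n c a (Suc m) =
      Some (if 1 \<le> (\<Sum>j<n. a m j * point n c q0 j) then q0 else mw_update n c (a m) q0)"
    unfolding q0_def by (simp add: alg_step_def Let_def)
  show "tracked (Suc m) (alg_state n c a (Suc m)) \<and> (\<forall>j<n. alg_point m j \<le> alg_point (Suc m) j)"
  proof (cases "1 \<le> (\<Sum>j<n. a m j * point n c q0 j)")
    case True
    then have X: "alg_point (Suc m) = point n c q0" using step by (simp add: state_point_def)
    have "real (changes (Suc m)) \<le> allowance q0"
      using start_count unfolding changes_Suc[of m] X by (auto split: if_splits)
    then show ?thesis
      using invariant_Suc_if_covered[OF start_inv True] start_mono step True X
      unfolding tracked_def by simp
  next
    case False
    define q' where "q' = mw_update n c (a m) q0"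
    note update = mw_update_invariant[OF start_inv False, folded q'_def]
    have X: "alg_point (Suc m) = point n c q'" using step False by (simp add: state_point_def q'_def)
    have "phase q' = phase q0" unfolding q'_def mw_update_def Let_def by simp
    moreover have "real n * clock q0 + 1 \<le> real n * clock q'"
      using mult_left_mono[OF update(2), of "real n"] n_ge_1 by (simp add: distrib_left)
    moreover have "real (changes (Suc m)) \<le> allowance q0 + 1"
      using start_count unfolding changes_Suc[of m] by (auto split: if_splits)
    ultimately have "real (changes (Suc m)) \<le> allowance q'" by simp
    moreover have "0 < budget q0" using start_inv unfolding phase_inv_def by simp
    then have "\<forall>j<n. alg_point m j \<le> alg_point (Suc m) j"
      using start_mono point_le_mw_update_point unfolding X q'_def by (blast intro: order_trans)
    ultimately show ?thesis using update(1) step False unfolding tracked_def q'_def by simp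
  qed
qed

lemma alg_state_tracked: "tracked m (alg_state n c a m)"
proof (induction m)
  case 0
  show ?case by (simp add: tracked_def)
next
  case (Suc m)
  from tracked_Suc(1)[OF Suc.IH] show ?case .
qed

lemma alg_point_mono: "j < n \<Longrightarrow> alg_point m j \<le> alg_point (Suc m) j"
  using tracked_Suc(2)[OF alg_state_tracked] .

lemma alg_state_invariant:
  assumes "m \<ge> 1"
  obtains q where "alg_state n c a m = Some q" and "invariant m q" and "real (changes m) \<le> allowance q"
proof -
  obtain k where "m = Suc k" using assms by (cases m) auto
  then obtain q where "alg_state n c a m = Some q" by simp
  with alg_state_tracked[of m] that show ?thesis unfolding tracked_def by simp
qed

lemma alg_point_feasible: "feasible n a m (alg_point m)"
proof (cases "m \<ge> 1")
  case True
  then obtain q where "alg_state n c a m = Some q" and "invariant m q"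
    by (rule alg_state_invariant)
  then show ?thesis unfolding phase_inv_def by (simp add: state_point_def)
next
  case False
  then have "m = 0" by simp
  then show ?thesis by (simp add: feasible_def state_point_def)
qed

lemma alg_point_cost:
  assumes "m \<ge> 1"
  shows "cost n c (alg_point m) \<le> 4 * gamma * OPT n c a m"
proof -
  obtain q where q: "alg_state n c a m = Some q" and inv: "invariant m q"
    using assms by (rule alg_state_invariant)
  have "cost n c (point n c q) \<le> 2 * gamma * budget q" by (rule cost_point_le[OF inv])
  also have "\<dots> \<le> 2 * gamma * (2 * OPT n c a m)"
    using inv ln_n_nonneg unfolding phase_inv_def by (intro mult_left_mono) auto
  finally show ?thesis using q by (simp add: state_point_def algebra_simps)
qed

lemma phase_le_log:
  assumes "m \<ge> 1" and inv: "invariant m q"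
  shows "real (phase q) \<le> 1 + 2 * (ln (OPT n c a m) + ln (1 / alpha1 n c a))"
proof -
  define Opt \<alpha> where "Opt = OPT n c a m" and "\<alpha> = alpha1 n c a"
  have phase_ge: "1 \<le> phase q" and "2 ^ phase q * \<alpha> \<le> budget q" and "budget q \<le> 2 * Opt"
    using inv unfolding phase_inv_def Opt_def \<alpha>_def by auto
  then have budget: "2 ^ phase q * \<alpha> \<le> 2 * Opt" by linarith
  have \<alpha>_pos: "0 < \<alpha>" and Opt_pos: "0 < Opt"
    unfolding \<alpha>_def Opt_def using alpha1_pos OPT_pos[OF assms(1)] by auto
  have "ln (2 ^ phase q * \<alpha>) \<le> ln (2 * Opt)"
    using budget \<alpha>_pos Opt_pos by (subst ln_le_cancel_iff) auto
  then have "(real (phase q) - 1) * ln 2 \<le> ln Opt - ln \<alpha>"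
    using \<alpha>_pos Opt_pos by (simp add: ln_mult ln_realpow algebra_simps)
  moreover have "(real (phase q) - 1) * (1 / 2) \<le> (real (phase q) - 1) * ln 2"
    using phase_ge ln_2_ge_half by (intro mult_left_mono) auto
  ultimately show ?thesis
    using \<alpha>_pos unfolding Opt_def[symmetric] \<alpha>_def[symmetric] by (simp add: ln_div)
qed

lemma one_plus_n_clock_max_le: "1 + real n * clock_max \<le> 42 * real n ^ 2"
proof -
  have "real n * ln (real n) \<le> real n * (real n - 1)"
    using n_ge_1 ln_le_minus_one[of "real n"] by (intro mult_left_mono) auto
  moreover have "real n * (real n - 1) = real n * real n - real n" by (simp add: algebra_simps)
  moreover have "1 \<le> real n" and "real n \<le> real n * real n" using n_ge_1 by simp_all
  moreover have "real n * clock_max = 4 * (real n * ln (real n)) + 41 * real n"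
    by (simp add: algebra_simps)
  ultimately show ?thesis unfolding power2_eq_square by linarith
qed

lemma allowance_le:
  assumes "m \<ge> 1" and inv: "invariant m q"
  defines "W \<equiv> real n + \<bar>ln (OPT n c a m)\<bar> + \<bar>ln (1 / alpha1 n c a)\<bar> + 1"
  shows "allowance q \<le> 84 * W ^ 3"
proof -
  have "real n * clock q \<le> real n * clock_max"
    using clock_le_clock_max[OF inv] by (intro mult_left_mono) auto
  then have "allowance q \<le> real (phase q) * (1 + real n * clock_max)"
    by (simp add: algebra_simps)
  also have "\<dots> \<le> (2 * W) * (42 * real n ^ 2)"
  proof (rule mult_mono)
    show "real (phase q) \<le> 2 * W"
      using phase_le_log[OF assms(1,2)] n_ge_1 abs_ge_self[of "ln (OPT n c a m)"]
        abs_ge_self[of "ln (1 / alpha1 n c a)"] unfolding W_def by simp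
    show "1 + real n * clock_max \<le> 42 * real n ^ 2" by (rule one_plus_n_clock_max_le)
  qed (use ln_n_nonneg in \<open>auto simp: W_def\<close>)
  also have "\<dots> \<le> (2 * W) * (42 * W ^ 2)"
    unfolding W_def by (intro mult_left_mono power_mono) auto
  also have "\<dots> = 84 * W ^ 3" by (simp add: power2_eq_square power3_eq_cube)
  finally show ?thesis .
qed

lemma changes_le:
  assumes "m \<ge> 1"
  shows "real (changes m) \<le> 84 * (real n + \<bar>ln (OPT n c a m)\<bar> + \<bar>ln (1 / alpha1 n c a)\<bar> + 1) ^ 3"
proof -
  obtain q where "invariant m q" and "real (changes m) \<le> allowance q"
    using assms by (rule alg_state_invariant)
  with allowance_le[OF assms] show ?thesis by (meson order_trans)
qed

end

theorem theorem8:
  shows "\<exists>(alg :: nat \<Rightarrow> (nat \<Rightarrow> real) \<Rightarrow> (nat \<Rightarrow> real) list \<Rightarrow> (nat \<Rightarrow> real))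
            (C::real) (K::real) (d::nat).
    \<forall>(n::nat) (c :: nat \<Rightarrow> real) (a :: nat \<Rightarrow> nat \<Rightarrow> real).
      n \<ge> 1 \<longrightarrow> (\<forall>j<n. c j > 0) \<longrightarrow>
      (\<forall>i. (\<forall>j<n. 0 \<le> a i j) \<and> (\<exists>j<n. 0 < a i j)) \<longrightarrow>
      (let X = (\<lambda>m. alg n c (map a [0..<m])) in
         (\<forall>j<n. X 0 j = 0)
       \<and> (\<forall>m. \<forall>j<n. X m j \<le> X (Suc m) j)
       \<and> (\<forall>m. feasible n a m (X m))
       \<and> (\<forall>m\<ge>1. cost n c (X m) \<le> C * (1 + ln (real n)) * OPT n c a m)
       \<and> (\<forall>m\<ge>1. real (card {i. i < m \<and> (\<exists>j<n. X i j \<noteq> X (Suc i) j)})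
                 \<le> K * (real n + \<bar>ln (OPT n c a m)\<bar> + \<bar>ln (1 / alpha1 n c a)\<bar> + 1) ^ d))"
proof (rule exI[of _ online_cover], rule exI[of _ 496], rule exI[of _ 84], rule exI[of _ 3], intro allI impI)
  fix n :: nat and c :: "nat \<Rightarrow> real" and a :: "nat \<Rightarrow> nat \<Rightarrow> real"
  assume "1 \<le> n" "\<forall>j<n. 0 < c j" "\<forall>i. (\<forall>j<n. 0 \<le> a i j) \<and> (\<exists>j<n. 0 < a i j)"
  then interpret covering_instance n c a by unfold_locales auto
  show "let X = (\<lambda>m. online_cover n c (map a [0..<m])) in
         (\<forall>j<n. X 0 j = 0)
       \<and> (\<forall>m. \<forall>j<n. X m j \<le> X (Suc m) j)
       \<and> (\<forall>m. feasible n a m (X m))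
       \<and> (\<forall>m\<ge>1. cost n c (X m) \<le> 496 * (1 + ln (real n)) * OPT n c a m)
       \<and> (\<forall>m\<ge>1. real (card {i. i < m \<and> (\<exists>j<n. X i j \<noteq> X (Suc i) j)})
                 \<le> 84 * (real n + \<bar>ln (OPT n c a m)\<bar> + \<bar>ln (1 / alpha1 n c a)\<bar> + 1) ^ 3)"
    unfolding Let_def online_cover_prefix
    using alg_point_mono alg_point_feasible alg_point_cost changes_le
    by (auto simp: state_point_def changes_def)
qed

end
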